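(* Let $N_1$ and $N_2$ be phylogenetic networks on the same set $S$ of taxa. Then $m(N_1,N_2)\ge d_\mu(N_1,N_2)$.
   Context: A phylogenetic network on $S=\{1,\dots,n\}$ is a finite rooted directed acyclic graph whose leaves are bijectively labeled by $S$. For a node $v$, $\mu(v)=(m_1(v),\dots,m_n(v))$ where $m_i(v)$ is the number of directed paths from $v$ to leaf $i$; $\mu(N)$ is the multiset $\{\mu(v)\}$ over all nodes, and $d_\mu(N_1,N_2)=\frac12|\mu(N_1)\bigtriangleup\mu(N_2)|$. The nested label $\ell(v)$ is defined by induction on height: $\ell(v)=\{i\}$ for the leaf labeled $i$, otherwise the multiset of nested labels of the children of $v$; $\Upsilon(N)$ is the multiset of nested labels of all nodes, and $m(N_1,N_2)=\frac12|\Upsilon(N_1)\bigtriangleup\Upsilon(N_2)|$. Here $\bigtriangleup$ is multiset symmetric difference (multiplicity $|M_1(x)-M_2(x)|$) and $|\cdot|$ is the sum of multiplicities. *)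

theory Defs
  imports Complex_Main "HOL-Library.Multiset"
begin

definition leaves :: "'a set \<Rightarrow> ('a \<times> 'a) set \<Rightarrow> 'a set" where
  "leaves V E = {v \<in> V. \<forall>w. (v, w) \<notin> E}"

definition phylo_net :: "nat \<Rightarrow> 'a set \<Rightarrow> ('a \<times> 'a) set \<Rightarrow> ('a \<Rightarrow> nat) \<Rightarrow> bool" where
  "phylo_net n V E lab \<longleftrightarrow>
     finite V \<and> E \<subseteq> V \<times> V \<and>
     (\<forall>v. (v, v) \<notin> E\<^sup>+) \<and>
     (\<exists>r\<in>V. \<forall>v\<in>V. (r, v) \<in> E\<^sup>*) \<and>
     bij_betw lab (leaves V E) {1..n}"

text \<open>Directed paths from v to w, as nonempty vertex lists (the graph has no parallel arcs).\<close>
definition dpaths :: "('a \<times> 'a) set \<Rightarrow> 'a \<Rightarrow> 'a \<Rightarrow> 'a list set" where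
  "dpaths E v w = {p. p \<noteq> [] \<and> hd p = v \<and> last p = w \<and>
                      (\<forall>j. Suc j < length p \<longrightarrow> (p ! j, p ! Suc j) \<in> E)}"

definition mcount :: "'a set \<Rightarrow> ('a \<times> 'a) set \<Rightarrow> ('a \<Rightarrow> nat) \<Rightarrow> nat \<Rightarrow> 'a \<Rightarrow> nat" where
  "mcount V E lab i v = card (\<Union>u\<in>{u \<in> leaves V E. lab u = i}. dpaths E v u)"

definition mu_vec :: "nat \<Rightarrow> 'a set \<Rightarrow> ('a \<times> 'a) set \<Rightarrow> ('a \<Rightarrow> nat) \<Rightarrow> 'a \<Rightarrow> nat list" where
  "mu_vec n V E lab v = map (\<lambda>i. mcount V E lab i v) [1..<Suc n]"

definition mu_rep :: "nat \<Rightarrow> 'a set \<Rightarrow> ('a \<times> 'a) set \<Rightarrow> ('a \<Rightarrow> nat) \<Rightarrow> nat list multiset" where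
  "mu_rep n V E lab = image_mset (mu_vec n V E lab) (mset_set V)"

text \<open>Nested labels: a leaf gets {i} (here NLeaf i), an internal node the multiset of its children's labels.\<close>
datatype nlabel = NLeaf nat | NNode "nlabel multiset"

text \<open>Recursion on height, with fuel k; fuel card V exceeds the height of every node of a DAG.\<close>
fun nlab_fuel :: "nat \<Rightarrow> 'a set \<Rightarrow> ('a \<times> 'a) set \<Rightarrow> ('a \<Rightarrow> nat) \<Rightarrow> 'a \<Rightarrow> nlabel" where
  "nlab_fuel 0 V E lab v = NNode {#}"
| "nlab_fuel (Suc k) V E lab v =
     (if v \<in> leaves V E then NLeaf (lab v)
      else NNode (image_mset (nlab_fuel k V E lab) (mset_set {w. (v, w) \<in> E})))"

definition nlab :: "'a set \<Rightarrow> ('a \<times> 'a) set \<Rightarrow> ('a \<Rightarrow> nat) \<Rightarrow> 'a \<Rightarrow> nlabel" where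
  "nlab V E lab v = nlab_fuel (card V) V E lab v"

definition upsilon :: "'a set \<Rightarrow> ('a \<times> 'a) set \<Rightarrow> ('a \<Rightarrow> nat) \<Rightarrow> nlabel multiset" where
  "upsilon V E lab = image_mset (nlab V E lab) (mset_set V)"

definition msymdiff :: "'b multiset \<Rightarrow> 'b multiset \<Rightarrow> 'b multiset" where
  "msymdiff A B = (A - B) + (B - A)"

definition d_mu :: "nat \<Rightarrow> 'a set \<Rightarrow> ('a \<times> 'a) set \<Rightarrow> ('a \<Rightarrow> nat) \<Rightarrow>
                    'b set \<Rightarrow> ('b \<times> 'b) set \<Rightarrow> ('b \<Rightarrow> nat) \<Rightarrow> real" where
  "d_mu n V1 E1 l1 V2 E2 l2 = real (size (msymdiff (mu_rep n V1 E1 l1) (mu_rep n V2 E2 l2))) / 2"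

definition m_dist :: "'a set \<Rightarrow> ('a \<times> 'a) set \<Rightarrow> ('a \<Rightarrow> nat) \<Rightarrow>
                    'b set \<Rightarrow> ('b \<times> 'b) set \<Rightarrow> ('b \<Rightarrow> nat) \<Rightarrow> real" where
  "m_dist V1 E1 l1 V2 E2 l2 = real (size (msymdiff (upsilon V1 E1 l1) (upsilon V2 E2 l2))) / 2"

end

theory Submission
  imports Defs
begin

text \<open>The path-multiplicity vector of a node is a function of its nested label: m_i(v) is the
number of occurrences of the leaf label i in \<ell>(v), counted with multiplicity through all levels,
since the paths from v to leaf i split according to the child of v they pass through. Hence
\<mu>(N) is the image of \<Upsilon>(N) under one fixed map, and applying a map to two multisets
cannot enlarge their symmetric difference.\<close>

lemma image_mset_diff_subseteq: "image_mset f A - image_mset f B \<subseteq># image_mset f (A - B)"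
proof -
  have "image_mset f (A - B) = image_mset f A - image_mset f (A \<inter># B)"
    by (metis diff_intersect_left_idem image_mset_Diff subset_mset.inf.cobounded1)
  moreover have "image_mset f (A \<inter># B) \<subseteq># image_mset f B"
    by (intro image_mset_subseteq_mono) simp
  ultimately show ?thesis
    by (auto simp: subseteq_mset_def intro: diff_le_mono2)
qed

lemma size_msymdiff_image_mset_le:
  "size (msymdiff (image_mset f A) (image_mset f B)) \<le> size (msymdiff A B)"
proof -
  have "size (image_mset f A - image_mset f B) \<le> size (A - B)"
    and "size (image_mset f B - image_mset f A) \<le> size (B - A)"
    using size_mset_mono[OF image_mset_diff_subseteq] by (metis size_image_mset)+
  then show ?thesis
    unfolding msymdiff_def size_union by (rule add_mono)
qed

lemma dpaths_leaf_source:
  assumes "v \<in> leaves V E"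
  shows "dpaths E v u = (if u = v then {[v]} else {})"
proof -
  have "p = [v]" if p: "p \<in> dpaths E v u" for p
  proof (cases p)
    case (Cons x q)
    have "q = []"
    proof (rule ccontr)
      assume "q \<noteq> []"
      with p Cons have "(v, hd q) \<in> E"
        by (auto simp: dpaths_def hd_conv_nth dest: spec[of _ 0])
      with assms show False by (simp add: leaves_def)
    qed
    with p Cons show ?thesis by (simp add: dpaths_def)
  qed (use p in \<open>simp add: dpaths_def\<close>)
  moreover have "[v] \<in> dpaths E v u \<longleftrightarrow> u = v"
    by (auto simp: dpaths_def)
  ultimately show ?thesis by (simp only: if_split) blast
qed

lemma dpaths_inner_source:
  assumes "u \<noteq> v"
  shows "dpaths E v u = (\<Union>w\<in>{w. (v, w) \<in> E}. Cons v ` dpaths E w u)"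
proof
  show "dpaths E v u \<subseteq> (\<Union>w\<in>{w. (v, w) \<in> E}. Cons v ` dpaths E w u)"
  proof
    fix p assume p: "p \<in> dpaths E v u"
    then obtain q where pq: "p = v # q"
      by (cases p) (auto simp: dpaths_def)
    have "q \<noteq> []" using p pq assms by (auto simp: dpaths_def)
    have "(v, hd q) \<in> E"
      using p pq \<open>q \<noteq> []\<close> by (auto simp: dpaths_def hd_conv_nth dest: spec[of _ 0])
    moreover have "q \<in> dpaths E (hd q) u"
      using p pq \<open>q \<noteq> []\<close> by (auto simp: dpaths_def dest: spec[of _ "Suc _"])
    ultimately show "p \<in> (\<Union>w\<in>{w. (v, w) \<in> E}. Cons v ` dpaths E w u)"
      using pq by blast
  qed
next
  show "(\<Union>w\<in>{w. (v, w) \<in> E}. Cons v ` dpaths E w u) \<subseteq> dpaths E v u"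
  proof clarify
    fix w q assume e: "(v, w) \<in> E" and q: "q \<in> dpaths E w u"
    have "Suc j < length (v # q) \<Longrightarrow> ((v # q) ! j, (v # q) ! Suc j) \<in> E" for j
      using e q by (cases j) (auto simp: dpaths_def hd_conv_nth)
    then show "v # q \<in> dpaths E v u" using q by (simp add: dpaths_def)
  qed
qed

definition label_paths :: "'a set \<Rightarrow> ('a \<times> 'a) set \<Rightarrow> ('a \<Rightarrow> nat) \<Rightarrow> nat \<Rightarrow> 'a \<Rightarrow> 'a list set" where
  "label_paths V E lab i v = (\<Union>u\<in>{u \<in> leaves V E. lab u = i}. dpaths E v u)"

lemma label_paths_leaf:
  assumes "v \<in> leaves V E"
  shows "label_paths V E lab i v = (if lab v = i then {[v]} else {})"
  using assms by (auto simp: label_paths_def dpaths_leaf_source split: if_splits)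

lemma label_paths_inner:
  assumes "v \<notin> leaves V E"
  shows "label_paths V E lab i v = (\<Union>w\<in>{w. (v, w) \<in> E}. Cons v ` label_paths V E lab i w)"
proof -
  have "dpaths E v u = (\<Union>w\<in>{w. (v, w) \<in> E}. Cons v ` dpaths E w u)" if "u \<in> leaves V E" for u
    using that assms by (intro dpaths_inner_source) auto
  then show ?thesis unfolding label_paths_def by auto
qed

lemma hd_label_paths: "p \<in> label_paths V E lab i w \<Longrightarrow> p \<noteq> [] \<and> hd p = w"
  unfolding label_paths_def dpaths_def by auto

lemma card_label_paths_inner:
  assumes "v \<notin> leaves V E" and "finite {w. (v, w) \<in> E}"
    and "\<And>w. (v, w) \<in> E \<Longrightarrow> finite (label_paths V E lab i w)"
  shows "finite (label_paths V E lab i v)"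
    and "card (label_paths V E lab i v) = (\<Sum>w | (v, w) \<in> E. card (label_paths V E lab i w))"
proof -
  let ?P = "label_paths V E lab i"
  have disjoint: "Cons v ` ?P w1 \<inter> Cons v ` ?P w2 = {}" if "w1 \<noteq> w2" for w1 w2
    using hd_label_paths[of _ V E lab i w1] hd_label_paths[of _ V E lab i w2] that by blast
  show "finite (?P v)"
    unfolding label_paths_inner[OF assms(1)] using assms(2,3) by blast
  have "card (?P v) = (\<Sum>w | (v, w) \<in> E. card (Cons v ` ?P w))"
    unfolding label_paths_inner[OF assms(1)]
    using assms(2,3) disjoint by (intro card_UN_disjoint) auto
  then show "card (?P v) = (\<Sum>w | (v, w) \<in> E. card (?P w))"
    by (simp add: card_image)
qed

lemma card_descendants_less:
  assumes "finite V" and "E \<subseteq> V \<times> V" and "\<forall>x. (x, x) \<notin> E\<^sup>+" and "(v, w) \<in> E"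
  shows "card {x. (w, x) \<in> E\<^sup>+} < card {x. (v, x) \<in> E\<^sup>+}"
proof (rule psubset_card_mono)
  show "finite {x. (v, x) \<in> E\<^sup>+}"
    using trancl_subset_Sigma[OF assms(2)] assms(1) by (auto intro: finite_subset)
  have "w \<in> {x. (v, x) \<in> E\<^sup>+}" and "w \<notin> {x. (w, x) \<in> E\<^sup>+}"
    using assms(3,4) by auto
  moreover have "{x. (w, x) \<in> E\<^sup>+} \<subseteq> {x. (v, x) \<in> E\<^sup>+}"
    using assms(4) by (auto intro: trancl_into_trancl2)
  ultimately show "{x. (w, x) \<in> E\<^sup>+} \<subset> {x. (v, x) \<in> E\<^sup>+}" by blast
qed

primrec leaf_count :: "nat \<Rightarrow> nlabel \<Rightarrow> nat" where
  "leaf_count i (NLeaf j) = (if i = j then 1 else 0)"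
| "leaf_count i (NNode M) = sum_mset (image_mset (leaf_count i) M)"

lemma label_paths_nlab_fuel:
  assumes "finite V" and "E \<subseteq> V \<times> V" and "\<forall>x. (x, x) \<notin> E\<^sup>+"
    and "card {x. (v, x) \<in> E\<^sup>+} < k"
  shows "finite (label_paths V E lab i v)
    \<and> card (label_paths V E lab i v) = leaf_count i (nlab_fuel k V E lab v)"
  using assms(4)
proof (induction k arbitrary: v)
  case 0
  then show ?case by simp
next
  case (Suc k)
  show ?case
  proof (cases "v \<in> leaves V E")
    case True
    then show ?thesis by (simp add: label_paths_leaf)
  next
    case False
    let ?C = "{w. (v, w) \<in> E}"
    have "finite ?C"
      using assms(1,2) by (auto intro: finite_subset)
    have IH: "finite (label_paths V E lab i w)
        \<and> card (label_paths V E lab i w) = leaf_count i (nlab_fuel k V E lab w)" if "w \<in> ?C" for w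
      using Suc card_descendants_less[OF assms(1-3)] that by force
    have "card (label_paths V E lab i v) = (\<Sum>w\<in>?C. card (label_paths V E lab i w))"
      using card_label_paths_inner(2)[OF False \<open>finite ?C\<close>] IH by blast
    also have "\<dots> = (\<Sum>w\<in>?C. leaf_count i (nlab_fuel k V E lab w))"
      using IH by simp
    also have "\<dots> = leaf_count i (nlab_fuel (Suc k) V E lab v)"
      using False by (simp add: sum_unfold_sum_mset image_mset.compositionality o_def)
    finally show ?thesis
      using card_label_paths_inner(1)[OF False \<open>finite ?C\<close>] IH by blast
  qed
qed

lemma mcount_eq_leaf_count_nlab:
  assumes "phylo_net n V E lab" and "v \<in> V"
  shows "mcount V E lab i v = leaf_count i (nlab V E lab v)"
proof -
  have fin: "finite V" and EV: "E \<subseteq> V \<times> V" and acyclic: "\<forall>x. (x, x) \<notin> E\<^sup>+"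
    using assms(1) by (auto simp: phylo_net_def)
  have "{x. (v, x) \<in> E\<^sup>+} \<subset> V"
    using trancl_subset_Sigma[OF EV] acyclic assms(2) by auto
  then have "card {x. (v, x) \<in> E\<^sup>+} < card V"
    using fin by (rule psubset_card_mono[rotated])
  then show ?thesis
    using label_paths_nlab_fuel[OF fin EV acyclic]
    unfolding mcount_def nlab_def label_paths_def[symmetric] by blast
qed

definition mu_of_nlabel :: "nat \<Rightarrow> nlabel \<Rightarrow> nat list" where
  "mu_of_nlabel n L = map (\<lambda>i. leaf_count i L) [1..<Suc n]"

lemma mu_rep_eq_image_upsilon:
  assumes "phylo_net n V E lab"
  shows "mu_rep n V E lab = image_mset (mu_of_nlabel n) (upsilon V E lab)"
proof -
  have "finite V" using assms by (simp add: phylo_net_def)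
  then show ?thesis
    unfolding mu_rep_def upsilon_def image_mset.compositionality
    using mcount_eq_leaf_count_nlab[OF assms]
    by (intro image_mset_cong) (simp add: mu_vec_def mu_of_nlabel_def)
qed

theorem proposition5:
  fixes V1 :: "'a set" and E1 :: "('a \<times> 'a) set" and l1 :: "'a \<Rightarrow> nat"
    and V2 :: "'b set" and E2 :: "('b \<times> 'b) set" and l2 :: "'b \<Rightarrow> nat"
    and n :: nat
  assumes "phylo_net n V1 E1 l1" and "phylo_net n V2 E2 l2"
  shows "m_dist V1 E1 l1 V2 E2 l2 \<ge> d_mu n V1 E1 l1 V2 E2 l2"
  using size_msymdiff_image_mset_le[of "mu_of_nlabel n" "upsilon V1 E1 l1" "upsilon V2 E2 l2"]
  unfolding m_dist_def d_mu_def mu_rep_eq_image_upsilon[OF assms(1)] mu_rep_eq_image_upsilon[OF assms(2)]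
  by (simp add: divide_right_mono)

end
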